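(* For the boundary Markov chain started from $M_0=0$ and any integer $n\ge0$, the number of times $t\ge0$ with $M_t=n$ is a geometric random variable with mean \[ \frac{3n+3}{2n+3}\cdot\frac{(n+3/2)_{n+1}}{(n+1)!}, \] and this mean is asymptotic to $c\sqrt n$ as $n\to\infty$ for some constant $c>0$.
   Context: The boundary Markov chain is the Markov chain $(M_n)_{n\ge0}$ on $\{0,1,2,\dots\}$ with $M_{n+1}=M_n+X_n$. Given $M_n=m$, its step $X_n$ has the law \[ \mathbb P(X_n=1\mid M_n=m)=\frac{2m+3}{3m+3}. \] For $1\le k\le m$, \[ \mathbb P(X_n=-k\mid M_n=m)=\frac{2(2k-2)!}{(k-1)!(k+1)!}\cdot\frac{m!^2(2m-2k+1)!}{(m-k)!^2(2m+1)!}. \] The descending factorial is $(x)_k=x(x-1)\cdots(x-k+1)$. *)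

theory Defs
  imports "HOL-Probability.Probability" "HOL-Library.Landau_Symbols"
begin

definition desc_fact :: "real \<Rightarrow> nat \<Rightarrow> real" where
  "desc_fact x k = (\<Prod>i<k. (x - real i))"

definition bmc_trans :: "nat \<Rightarrow> nat \<Rightarrow> real" where
  "bmc_trans m m' =
     (if m' = m + 1 then (2 * real m + 3) / (3 * real m + 3)
      else if m' < m then
        (let k = m - m' in
          (2 * fact (2*k - 2)) / (fact (k - 1) * fact (k + 1)) *
          (fact m ^ 2 * fact (2*m - 2*k + 1)) / (fact (m - k) ^ 2 * fact (2*m + 1)))
      else 0)"

definition boundary_chain :: "'a measure \<Rightarrow> (nat \<Rightarrow> 'a \<Rightarrow> nat) \<Rightarrow> bool" where
  "boundary_chain \<Omega> X \<longleftrightarrow>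
     prob_space \<Omega> \<and>
     (\<forall>t. X t \<in> measurable \<Omega> (count_space UNIV)) \<and>
     measure \<Omega> {\<omega> \<in> space \<Omega>. X 0 \<omega> = 0} = 1 \<and>
     (\<forall>t xs y. length xs = Suc t \<longrightarrow>
        measure \<Omega> {\<omega> \<in> space \<Omega>. (\<forall>i\<le>t. X i \<omega> = xs ! i) \<and> X (Suc t) \<omega> = y}
        = measure \<Omega> {\<omega> \<in> space \<Omega>. \<forall>i\<le>t. X i \<omega> = xs ! i} * bmc_trans (xs ! t) y)"

definition visit_mean :: "nat \<Rightarrow> real" where
  "visit_mean n = (3 * real n + 3) / (2 * real n + 3) *
                  desc_fact (real n + 3/2) (n + 1) / fact (n + 1)"

end

theory Submission
  imports Defs
begin

text \<open>
  The chain is the Doob transform, by the positive function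
  \<open>h m = (2m+1)! / (m!\<^sup>2 4\<^sup>m)\<close> (\<open>bmc_h\<close>), of the translation-invariant kernel \<open>\<nu>\<close>
  (\<open>bmc_base\<close>) that jumps up by one with weight 2/3 and down by \<open>k \<ge> 1\<close> with weight
  \<open>2 (2k-2)! / ((k-1)! (k+1)! 4\<^sup>k)\<close>; \<open>h\<close> is \<open>\<nu>\<close>-harmonic.
  Since upward steps have size one, a chain below \<open>n\<close> surely visits \<open>n\<close>, while translation
  invariance of \<open>\<nu>\<close> makes \<open>x \<mapsto> h (x - n - 1) / h x\<close> (for \<open>x > n\<close>) harmonic away from \<open>n\<close>:
  it is the probability of never visiting \<open>n\<close> from \<open>x\<close>. From \<open>n\<close> itself the chain therefore
  escapes for ever with probability \<open>p = 2 / (3 h n)\<close> and otherwise returns, so the number of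
  visits is geometric with mean \<open>1/p = 3 h n / 2\<close>. Without stopping times, this is verified
  by comparing the probability of at least \<open>j\<close> visits up to time \<open>T\<close> with its claimed limit:
  the defect is bounded by \<open>P\<^sup>T\<close> (\<open>bmc_step ^^ T\<close>) applied to the hitting probability of
  \<open>n\<close>, which tends to 0 because every state is transient and the hitting probability
  vanishes at infinity. Finally \<open>h n\<^sup>2 / (n+1)\<close> increases and \<open>h n\<^sup>2 / (2n+1)\<close> decreases,
  so \<open>h n / \<surd>n\<close> converges.
\<close>

lemma sum_lessThan_add: "(\<Sum>y<m + k. f y) = (\<Sum>y<m. f y) + (\<Sum>z<k. f (m + z :: nat))"
  by (induction k) (simp_all add: add.assoc)

lemma ex_card_prefix_ge_iff:
  fixes S :: "nat set"
  shows "(\<exists>T. k \<le> card {t \<in> S. t \<le> T}) \<longleftrightarrow> infinite S \<or> k \<le> card S"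
proof
  assume "\<exists>T. k \<le> card {t \<in> S. t \<le> T}"
  then obtain T where "k \<le> card {t \<in> S. t \<le> T}" ..
  moreover have "finite S \<Longrightarrow> card {t \<in> S. t \<le> T} \<le> card S"
    by (intro card_mono) auto
  ultimately show "infinite S \<or> k \<le> card S"
    by auto
next
  assume "infinite S \<or> k \<le> card S"
  then show "\<exists>T. k \<le> card {t \<in> S. t \<le> T}"
  proof
    assume "infinite S"
    then obtain B where B: "B \<subseteq> S" "finite B" "card B = k"
      using infinite_arbitrarily_large by blast
    then obtain T where "B \<subseteq> {..T}"
      using finite_nat_iff_bounded_le by blast
    then have "card B \<le> card {t \<in> S. t \<le> T}"
      using B by (intro card_mono) auto
    then show ?thesis
      using B by auto
  next
    assume k: "k \<le> card S"
    show ?thesis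
    proof (cases "finite S")
      case True
      then obtain T where "S \<subseteq> {..T}"
        using finite_nat_iff_bounded_le by blast
      then have "{t \<in> S. t \<le> T} = S"
        by auto
      then have "k \<le> card {t \<in> S. t \<le> T}"
        using k by simp
      then show ?thesis ..
    next
      case False
      then show ?thesis
        using k by simp
    qed
  qed
qed

lemma finite_card_eq_iff_prefix_card:
  fixes S :: "nat set"
  shows "finite S \<and> card S = k \<longleftrightarrow> (\<exists>T. k \<le> card {t \<in> S. t \<le> T}) \<and> \<not> (\<exists>T. Suc k \<le> card {t \<in> S. t \<le> T})"
  by (auto simp: ex_card_prefix_ge_iff)

lemma desc_fact_Suc: "desc_fact (x + 1) (Suc k) = (x + 1) * desc_fact x k"
  unfolding desc_fact_def prod.lessThan_Suc_shift by (simp add: algebra_simps)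

section \<open>The boundary chain as a Doob transform\<close>

definition bmc_h :: "nat \<Rightarrow> real" where
  "bmc_h m = fact (2*m+1) / (fact m ^ 2 * 4 ^ m)"

lemma bmc_h_0 [simp]: "bmc_h 0 = 1"
  by (simp add: bmc_h_def)

lemma bmc_h_pos: "bmc_h m > 0"
  by (simp add: bmc_h_def)

lemma bmc_h_nonzero [simp]: "bmc_h m \<noteq> 0"
  using bmc_h_pos[of m] by simp

lemma bmc_h_Suc: "bmc_h (Suc m) = bmc_h m * (2 * m + 3) / (2 * m + 2)"
proof -
  define F G Q where "F = (fact (2 * m + 1) :: real)" and "G = (fact m :: real)" and "Q = (4 :: real) ^ m"
  have pos: "F > 0" "G > 0" "Q > 0"
    by (simp_all add: F_def G_def Q_def)
  have "bmc_h (Suc m) = (2 * m + 3) * (2 * m + 2) * F / (((m + 1) * G)\<^sup>2 * (4 * Q))"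
    by (simp add: bmc_h_def F_def G_def Q_def algebra_simps)
  also have "\<dots> = F / (G\<^sup>2 * Q) * (2 * m + 3) / (2 * m + 2)"
    using pos by (simp add: divide_simps) (simp add: algebra_simps power2_eq_square)
  finally show ?thesis
    by (simp add: bmc_h_def F_def G_def Q_def)
qed

lemma bmc_h_mono: "mono bmc_h"
  unfolding mono_iff_le_Suc using bmc_h_pos by (simp add: bmc_h_Suc field_simps)

lemma bmc_h_ge_1: "bmc_h m \<ge> 1"
  using bmc_h_mono by (metis bmc_h_0 le0 monoD)

definition jump_weight :: "nat \<Rightarrow> real" where
  "jump_weight k = 2 * fact (2*k-2) / (fact (k-1) * fact (k+1) * 4 ^ k)"

lemma jump_weight_pos: "jump_weight k > 0"
  by (simp add: jump_weight_def)

lemma jump_weight_1 [simp]: "jump_weight (Suc 0) = 1/4"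
  by (simp add: jump_weight_def)

lemma jump_weight_Suc:
  assumes "k \<ge> 1" shows "jump_weight (Suc k) = jump_weight k * (2 * k - 1) / (2 * k + 4)"
proof -
  obtain i where k: "k = Suc i" using assms by (cases k) auto
  define F G H Q where "F = (fact (2 * i) :: real)" and "G = (fact i :: real)"
    and "H = (fact (i + 2) :: real)" and "Q = (4 :: real) ^ k"
  have pos: "F > 0" "G > 0" "H > 0" "Q > 0"
    by (simp_all add: F_def G_def H_def Q_def)
  have "jump_weight (Suc k) = 2 * ((2 * i + 2) * (2 * i + 1) * F) / (((i + 1) * G) * ((i + 3) * H) * (4 * Q))"
    by (simp add: jump_weight_def k F_def G_def H_def Q_def algebra_simps)
  also have "\<dots> = 2 * F / (G * H * Q) * (2 * k - 1) / (2 * k + 4)"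
    using pos by (simp add: k divide_simps) (simp add: algebra_simps)
  finally show ?thesis
    by (simp add: jump_weight_def k F_def G_def H_def Q_def)
qed

lemma jump_weight_partial_sum:
  "(\<Sum>k=1..Suc j. jump_weight k * bmc_h (Suc j + d - k))
     = (j + d + 1) * bmc_h (j + d + 1) / (3 * (j + d + 2))
       - d * (2 * j + 1) * jump_weight (Suc j) * bmc_h d / (3 * (j + d + 2))"
proof (induction j arbitrary: d)
  case 0
  show ?case by (simp add: bmc_h_Suc divide_simps) (simp add: algebra_simps)
next
  case (Suc j)
  have "(\<Sum>k=1..Suc (Suc j). jump_weight k * bmc_h (Suc (Suc j) + d - k))
      = (\<Sum>k=1..Suc j. jump_weight k * bmc_h (Suc j + Suc d - k)) + jump_weight (Suc (Suc j)) * bmc_h d"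
    by simp
  also have "(\<Sum>k=1..Suc j. jump_weight k * bmc_h (Suc j + Suc d - k))
      = (j + d + 2) * bmc_h (j + d + 2) / (3 * (j + d + 3))
       - (d + 1) * (2 * j + 1) * jump_weight (Suc j) * bmc_h (Suc d) / (3 * (j + d + 3))"
    unfolding Suc.IH by (simp add: algebra_simps)
  also have "(j + d + 2) * bmc_h (j + d + 2) / (3 * (j + d + 3))
       - (d + 1) * (2 * j + 1) * jump_weight (Suc j) * bmc_h (Suc d) / (3 * (j + d + 3))
       + jump_weight (Suc (Suc j)) * bmc_h d
     = (j + d + 2) * bmc_h (j + d + 2) / (3 * (j + d + 3))
       - d * (2 * j + 3) * jump_weight (Suc (Suc j)) * bmc_h d / (3 * (j + d + 3))"
    by (simp add: jump_weight_Suc[of "Suc j"] bmc_h_Suc divide_simps) (simp add: algebra_simps)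
  finally show ?case by (simp add: algebra_simps)
qed

definition bmc_base :: "nat \<Rightarrow> nat \<Rightarrow> real" where
  "bmc_base x y = (if y = Suc x then 2/3 else if y < x then jump_weight (x - y) else 0)"

lemma bmc_base_nonneg: "bmc_base x y \<ge> 0"
  using jump_weight_pos by (simp add: bmc_base_def less_imp_le)

lemma bmc_base_shift: "bmc_base (s + x) (s + y) = bmc_base x y"
  by (simp add: bmc_base_def)

lemma bmc_base_harmonic: "(\<Sum>y<Suc (Suc x). bmc_base x y * bmc_h y) = bmc_h x"
proof -
  have jumps: "(\<Sum>y<x. bmc_base x y * bmc_h y) = x * bmc_h x / (3 * (x + 1))"
  proof (cases x)
    case (Suc j)
    have "(\<Sum>y<x. bmc_base x y * bmc_h y) = (\<Sum>k=1..x. jump_weight k * bmc_h (x - k))"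
      by (rule sum.reindex_bij_witness[where i = "\<lambda>k. x - k" and j = "\<lambda>y. x - y"])
         (auto simp: bmc_base_def)
    also have "\<dots> = x * bmc_h x / (3 * (x + 1))"
      using jump_weight_partial_sum[of j 0] by (simp add: Suc algebra_simps)
    finally show ?thesis .
  qed simp
  have "(\<Sum>y<Suc (Suc x). bmc_base x y * bmc_h y) = (\<Sum>y<x. bmc_base x y * bmc_h y) + 2/3 * bmc_h (Suc x)"
    by (simp add: bmc_base_def)
  also have "\<dots> = x * bmc_h x / (3 * (x + 1)) + 2/3 * bmc_h (Suc x)"
    by (simp only: jumps)
  also have "\<dots> = bmc_h x"
    by (simp add: bmc_h_Suc divide_simps) (simp add: algebra_simps)
  finally show ?thesis .
qed

lemma bmc_trans_doob_transform: "bmc_trans x y = bmc_base x y * bmc_h y / bmc_h x"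
proof -
  consider "y = Suc x" | "y < x" | "y \<noteq> Suc x" "\<not> y < x" by blast
  then show ?thesis
  proof cases
    case 1
    then have "bmc_trans x y = 2/3 * ((2 * x + 3) / (2 * x + 2))"
      by (simp add: bmc_trans_def divide_simps) (simp add: algebra_simps)
    also have "\<dots> = bmc_base x y * bmc_h y / bmc_h x"
      using 1 by (simp add: bmc_base_def bmc_h_Suc)
    finally show ?thesis .
  next
    case 2
    then obtain k where x: "x = y + k" and "k \<ge> 1"
      by (metis add_Suc_right le_add1 less_imp_Suc_add plus_1_eq_Suc)
    define A B C D E F G where "A = (fact (2 * k - 2) :: real)" and "B = (fact (k - 1) :: real)"
      and "C = (fact (k + 1) :: real)" and "D = (fact x :: real)" and "E = (fact (2 * y + 1) :: real)"
      and "F = (fact y :: real)" and "G = (fact (2 * x + 1) :: real)"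
    have pos: "B > 0" "C > 0" "D > 0" "F > 0" "G > 0"
      by (simp_all add: B_def C_def D_def F_def G_def)
    have "bmc_trans x y = 2 * A / (B * C) * (D\<^sup>2 * E) / (F\<^sup>2 * G)"
      using 2 by (simp add: bmc_trans_def x A_def B_def C_def D_def E_def F_def G_def)
    also have "\<dots> = 2 * A / (B * C * 4 ^ k) * (E / (F\<^sup>2 * 4 ^ y)) / (G / (D\<^sup>2 * (4 ^ y * 4 ^ k)))"
      using pos by (simp add: field_simps)
    finally show ?thesis
      using 2 by (simp add: bmc_base_def jump_weight_def bmc_h_def x power_add A_def B_def C_def D_def E_def F_def G_def)
  next
    case 3
    then show ?thesis by (simp add: bmc_trans_def bmc_base_def)
  qed
qed

lemma bmc_trans_nonneg: "bmc_trans x y \<ge> 0"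
  using bmc_base_nonneg[of x y] bmc_h_pos[of x] bmc_h_pos[of y] by (simp add: bmc_trans_doob_transform)

lemma bmc_trans_row_sum: "(\<Sum>y<Suc (Suc x). bmc_trans x y) = 1"
  using bmc_base_harmonic[of x] bmc_h_pos[of x]
  by (simp add: bmc_trans_doob_transform sum_divide_distrib[symmetric])

text \<open>\<open>bmc_trans x y\<close> vanishes for \<open>y > x + 1\<close>, so this is the full transition operator.\<close>

definition bmc_step :: "(nat \<Rightarrow> real) \<Rightarrow> nat \<Rightarrow> real" where
  "bmc_step f x = (\<Sum>y<Suc (Suc x). bmc_trans x y * f y)"

lemma bmc_step_const [simp]: "bmc_step (\<lambda>_. c) x = c"
  using bmc_trans_row_sum[of x] by (simp add: bmc_step_def flip: sum_distrib_right)

lemma bmc_step_add: "bmc_step (\<lambda>y. f y + g y) x = bmc_step f x + bmc_step g x"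
  by (simp add: bmc_step_def distrib_left sum.distrib)

lemma bmc_step_diff: "bmc_step (\<lambda>y. f y - g y) x = bmc_step f x - bmc_step g x"
  by (simp add: bmc_step_def right_diff_distrib sum_subtractf)

lemma bmc_step_mult_right: "bmc_step (\<lambda>y. f y * c) x = bmc_step f x * c"
  by (simp add: bmc_step_def sum_distrib_right mult.assoc del: sum.lessThan_Suc)

lemma bmc_step_divide: "bmc_step (\<lambda>y. f y / c) x = bmc_step f x / c"
  by (simp add: bmc_step_def sum_divide_distrib del: sum.lessThan_Suc)

lemma bmc_step_sum: "bmc_step (\<lambda>y. \<Sum>i\<in>I. f i y) x = (\<Sum>i\<in>I. bmc_step (f i) x)"
  by (simp add: bmc_step_def sum_distrib_left sum.swap[of _ I])

lemma bmc_step_mono: "(\<And>y. f y \<le> g y) \<Longrightarrow> bmc_step f x \<le> bmc_step g x"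
  unfolding bmc_step_def by (intro sum_mono mult_left_mono bmc_trans_nonneg)

lemma bmc_iter_mono: "(\<And>y. f y \<le> g y) \<Longrightarrow> (bmc_step ^^ T) f x \<le> (bmc_step ^^ T) g x"
  by (induction T arbitrary: x) (auto intro: bmc_step_mono)

lemma bmc_iter_const [simp]: "(bmc_step ^^ T) (\<lambda>_. c) = (\<lambda>_. c)"
  by (induction T) auto

lemma bmc_iter_nonneg: "(\<And>y. f y \<ge> 0) \<Longrightarrow> (bmc_step ^^ T) f x \<ge> 0"
  using bmc_iter_mono[of "\<lambda>_. 0" f T x] by simp

lemma bmc_iter_add: "(bmc_step ^^ T) (\<lambda>y. f y + g y) x = (bmc_step ^^ T) f x + (bmc_step ^^ T) g x"
proof (induction T arbitrary: x)
  case (Suc T)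
  then have "(bmc_step ^^ T) (\<lambda>y. f y + g y) = (\<lambda>y. (bmc_step ^^ T) f y + (bmc_step ^^ T) g y)"
    by auto
  then show ?case by (simp add: bmc_step_add)
qed simp

lemma bmc_iter_sum:
  "finite I \<Longrightarrow> (bmc_step ^^ T) (\<lambda>y. \<Sum>i\<in>I. f i y) x = (\<Sum>i\<in>I. (bmc_step ^^ T) (f i) x)"
  by (induction I rule: finite_induct) (simp_all add: bmc_iter_add)

section \<open>Hitting probabilities and transience\<close>

text \<open>
  \<open>avoid_prob n x\<close> is the probability that the chain started at \<open>x\<close> never visits \<open>n\<close> (it cannot
  jump over \<open>n\<close> from below), and \<open>escape_prob n\<close> the probability that it never returns to \<open>n\<close>.
\<close>

definition avoid_prob :: "nat \<Rightarrow> nat \<Rightarrow> real" where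
  "avoid_prob n x = (if n < x then bmc_h (x - Suc n) / bmc_h x else 0)"

definition hit_prob :: "nat \<Rightarrow> nat \<Rightarrow> real" where
  "hit_prob n x = 1 - avoid_prob n x"

definition escape_prob :: "nat \<Rightarrow> real" where
  "escape_prob n = 2 / (3 * bmc_h n)"

lemma avoid_prob_nonneg: "avoid_prob n x \<ge> 0"
  using bmc_h_pos by (simp add: avoid_prob_def less_imp_le)

lemma avoid_prob_le_1: "avoid_prob n x \<le> 1"
  using bmc_h_pos[of x] monoD[OF bmc_h_mono, of "x - Suc n" x] by (simp add: avoid_prob_def)

lemma hit_prob_nonneg: "hit_prob n x \<ge> 0"
  using avoid_prob_le_1 by (simp add: hit_prob_def)

lemma hit_prob_le_1: "hit_prob n x \<le> 1"
  using avoid_prob_nonneg by (simp add: hit_prob_def)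

lemma hit_prob_eq_1: "x \<le> n \<Longrightarrow> hit_prob n x = 1"
  by (simp add: hit_prob_def avoid_prob_def)

lemma escape_prob_pos: "escape_prob n > 0"
  using bmc_h_pos by (simp add: escape_prob_def)

lemma escape_prob_le_1: "escape_prob n \<le> 1"
  using bmc_h_ge_1[of n] by (simp add: escape_prob_def field_simps)

lemma bmc_step_avoid_prob:
  "bmc_step (avoid_prob n) x = avoid_prob n x + (if x = n then escape_prob n else 0)"
proof -
  consider "x < n" | "x = n" | a where "x = Suc n + a"
    by (metis add_Suc less_imp_Suc_add linorder_neqE_nat)
  then show ?thesis
  proof cases
    case 1
    then show ?thesis
      by (simp add: bmc_step_def avoid_prob_def del: sum.lessThan_Suc)
  next
    case 2
    then show ?thesis
      using bmc_h_pos[of n] bmc_h_pos[of "Suc n"]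
      by (simp add: bmc_step_def avoid_prob_def escape_prob_def bmc_trans_doob_transform bmc_base_def)
  next
    case 3
    have "bmc_step (avoid_prob n) x = (\<Sum>y<Suc n + Suc (Suc a). bmc_base x y * bmc_h y * avoid_prob n y) / bmc_h x"
      by (simp add: bmc_step_def 3 bmc_trans_doob_transform sum_divide_distrib del: sum.lessThan_Suc)
    also have "(\<Sum>y<Suc n + Suc (Suc a). bmc_base x y * bmc_h y * avoid_prob n y)
        = (\<Sum>z<Suc (Suc a). bmc_base x (Suc n + z) * bmc_h (Suc n + z) * avoid_prob n (Suc n + z))"
      by (subst sum_lessThan_add) (simp add: avoid_prob_def)
    also have "\<dots> = (\<Sum>z<Suc (Suc a). bmc_base a z * bmc_h z)"
      by (simp add: 3 avoid_prob_def bmc_base_shift del: sum.lessThan_Suc add_Suc)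
    also have "\<dots> = bmc_h a"
      by (rule bmc_base_harmonic)
    finally have "bmc_step (avoid_prob n) x = bmc_h a / bmc_h x" .
    moreover have "avoid_prob n x = bmc_h a / bmc_h x"
      by (simp add: 3 avoid_prob_def)
    ultimately show ?thesis
      using 3 by simp
  qed
qed

lemma bmc_step_hit_prob:
  "bmc_step (hit_prob n) x = hit_prob n x - (if x = n then escape_prob n else 0)"
proof -
  have "hit_prob n = (\<lambda>y. 1 - avoid_prob n y)"
    by (simp add: fun_eq_iff hit_prob_def)
  then show ?thesis
    by (simp add: bmc_step_diff bmc_step_avoid_prob hit_prob_def)
qed

lemma green_sum_le:
  "(\<Sum>t<T. (bmc_step ^^ t) (\<lambda>z. of_bool (z = y)) x) \<le> hit_prob y x / escape_prob y"
proof (induction T arbitrary: x)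
  case 0
  then show ?case
    by (simp add: divide_nonneg_pos hit_prob_nonneg escape_prob_pos)
next
  case (Suc T)
  have "(\<Sum>t<Suc T. (bmc_step ^^ t) (\<lambda>z. of_bool (z = y)) x)
      = of_bool (x = y) + bmc_step (\<lambda>z. \<Sum>t<T. (bmc_step ^^ t) (\<lambda>z. of_bool (z = y)) z) x"
    by (simp add: sum.lessThan_Suc_shift bmc_step_sum del: sum.lessThan_Suc)
  also have "\<dots> \<le> of_bool (x = y) + bmc_step (\<lambda>z. hit_prob y z / escape_prob y) x"
    using Suc.IH by (simp add: bmc_step_mono)
  also have "\<dots> = hit_prob y x / escape_prob y"
    using escape_prob_pos[of y]
    by (simp add: bmc_step_divide bmc_step_hit_prob field_simps)
  finally show ?case .
qed

lemma iter_indicator_tendsto_0: "(\<lambda>T. (bmc_step ^^ T) (\<lambda>z. of_bool (z = y)) x) \<longlonglongrightarrow> 0"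
proof (rule summable_LIMSEQ_zero)
  show "summable (\<lambda>T. (bmc_step ^^ T) (\<lambda>z. of_bool (z = y)) x)"
    by (rule summableI_nonneg_bounded[OF bmc_iter_nonneg green_sum_le]) simp
qed

lemma bmc_h_diff_le: "bmc_h (a + d) - bmc_h a \<le> d * bmc_h (a + d) / (2 * a + 2)"
proof (induction d)
  case (Suc d)
  have "bmc_h (a + Suc d) - bmc_h (a + d) = bmc_h (a + d) / (2 * (a + d) + 2)"
    by (simp add: bmc_h_Suc field_simps)
  also have "\<dots> \<le> bmc_h (a + d) / (2 * a + 2)"
    using bmc_h_pos[of "a + d"] by (intro divide_left_mono) auto
  finally have "bmc_h (a + Suc d) - bmc_h a \<le> (d + 1) * bmc_h (a + d) / (2 * a + 2)"
    using Suc.IH by (simp add: add_divide_distrib algebra_simps)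
  also have "\<dots> \<le> (d + 1) * bmc_h (a + Suc d) / (2 * a + 2)"
    using monoD[OF bmc_h_mono, of "a + d" "a + Suc d"] by (intro divide_right_mono mult_left_mono) auto
  finally show ?case by (simp add: ac_simps)
qed simp

lemma hit_prob_le:
  assumes "n < x" shows "hit_prob n x \<le> (real n + 1) / (2 * (real x - real n))"
proof -
  obtain a where x: "x = a + Suc n"
    using assms by (metis add.commute add_Suc less_imp_Suc_add)
  have "hit_prob n x = (bmc_h (a + Suc n) - bmc_h a) / bmc_h (a + Suc n)"
    by (simp add: hit_prob_def avoid_prob_def x field_simps)
  also have "\<dots> \<le> Suc n / (2 * a + 2)"
    using bmc_h_diff_le[of a "Suc n"] bmc_h_pos[of "a + Suc n"] by (simp add: field_simps)
  finally show ?thesis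
    by (simp add: x algebra_simps)
qed

lemma hit_prob_le_indicator: "hit_prob n z \<le> of_bool (z \<le> n + N) + (real n + 1) / (2 * (real N + 1))"
proof (cases "z \<le> n + N")
  case True
  then show ?thesis
    by (intro add_increasing2) (auto simp: hit_prob_le_1)
next
  case False
  then have "hit_prob n z \<le> (real n + 1) / (2 * (real z - real n))"
    by (intro hit_prob_le) simp
  also have "\<dots> \<le> (real n + 1) / (2 * (real N + 1))"
    using False by (intro divide_left_mono) auto
  finally show ?thesis
    using False by simp
qed

lemma iter_indicator_atMost_tendsto_0: "(\<lambda>T. (bmc_step ^^ T) (\<lambda>z. of_bool (z \<le> K)) x) \<longlonglongrightarrow> 0"
proof -
  have "(\<lambda>T. \<Sum>y\<le>K. (bmc_step ^^ T) (\<lambda>z. of_bool (z = y)) x) \<longlonglongrightarrow> 0"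
    by (intro tendsto_null_sum iter_indicator_tendsto_0)
  moreover have "(\<Sum>y\<le>K. of_bool (z = y)) = (of_bool (z \<le> K) :: real)" for z
    by (simp add: of_bool_def sum.delta')
  ultimately show ?thesis
    by (simp flip: bmc_iter_sum)
qed

lemma iter_hit_prob_tendsto_0: "(\<lambda>T. (bmc_step ^^ T) (hit_prob n) x) \<longlonglongrightarrow> 0"
proof (rule order_tendstoI)
  fix r :: real
  assume "r < 0"
  then show "\<forall>\<^sub>F T in sequentially. r < (bmc_step ^^ T) (hit_prob n) x"
    using bmc_iter_nonneg[OF hit_prob_nonneg] by (simp add: order_less_le_trans)
next
  fix r :: real
  assume "0 < r"
  obtain N :: nat where "(n + 1) / r < N"
    using reals_Archimedean2 by blast
  then have N: "(real n + 1) / (2 * (real N + 1)) < r / 2"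
    using \<open>0 < r\<close> by (simp add: field_simps)
  have "\<forall>\<^sub>F T in sequentially. (bmc_step ^^ T) (\<lambda>z. of_bool (z \<le> n + N)) x < r / 2"
    by (rule order_tendstoD(2)[OF iter_indicator_atMost_tendsto_0]) (use \<open>0 < r\<close> in simp)
  then show "\<forall>\<^sub>F T in sequentially. (bmc_step ^^ T) (hit_prob n) x < r"
  proof (rule eventually_mono)
    fix T
    assume small: "(bmc_step ^^ T) (\<lambda>z. of_bool (z \<le> n + N)) x < r / 2"
    have "(bmc_step ^^ T) (hit_prob n) x
        \<le> (bmc_step ^^ T) (\<lambda>z. of_bool (z \<le> n + N) + (real n + 1) / (2 * (real N + 1))) x"
      by (rule bmc_iter_mono) (rule hit_prob_le_indicator)
    also have "\<dots> = (bmc_step ^^ T) (\<lambda>z. of_bool (z \<le> n + N)) x + (real n + 1) / (2 * (real N + 1))"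
      by (simp only: bmc_iter_add bmc_iter_const)
    finally show "(bmc_step ^^ T) (hit_prob n) x < r"
      using small N by linarith
  qed
qed

section \<open>Counting visits along paths\<close>

fun bmc_paths :: "nat \<Rightarrow> nat \<Rightarrow> nat list set" where
  "bmc_paths x 0 = {[x]}"
| "bmc_paths x (Suc T) = (\<Union>y<Suc (Suc x). (#) x ` bmc_paths y T)"

fun path_weight :: "nat list \<Rightarrow> real" where
  "path_weight (x # y # ys) = bmc_trans x y * path_weight (y # ys)"
| "path_weight _ = 1"

lemma finite_bmc_paths: "finite (bmc_paths x T)"
  by (induction T arbitrary: x) auto

lemma bmc_paths_shape: "xs \<in> bmc_paths x T \<Longrightarrow> xs \<noteq> [] \<and> hd xs = x \<and> length xs = Suc T"
  by (induction T arbitrary: x xs) auto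

lemma path_weight_Cons: "ys \<in> bmc_paths y T \<Longrightarrow> path_weight (x # ys) = bmc_trans x y * path_weight ys"
  using bmc_paths_shape[of ys y T] by (cases ys) auto

lemma path_weight_snoc: "xs \<noteq> [] \<Longrightarrow> path_weight (xs @ [y]) = path_weight xs * bmc_trans (last xs) y"
  by (induction xs rule: path_weight.induct) auto

definition path_sum :: "nat \<Rightarrow> nat \<Rightarrow> (nat list \<Rightarrow> real) \<Rightarrow> real" where
  "path_sum x T F = (\<Sum>xs\<in>bmc_paths x T. path_weight xs * F xs)"

lemma path_sum_0 [simp]: "path_sum x 0 F = F [x]"
  by (simp add: path_sum_def)

lemma path_sum_Suc: "path_sum x (Suc T) F = bmc_step (\<lambda>y. path_sum y T (\<lambda>ys. F (x # ys))) x"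
proof -
  have "path_sum x (Suc T) F = (\<Sum>y<Suc (Suc x). \<Sum>xs\<in>(#) x ` bmc_paths y T. path_weight xs * F xs)"
    unfolding path_sum_def bmc_paths.simps
  proof (rule sum.UNION_disjoint)
    show "\<forall>y\<in>{..<Suc (Suc x)}. \<forall>y'\<in>{..<Suc (Suc x)}. y \<noteq> y' \<longrightarrow> (#) x ` bmc_paths y T \<inter> (#) x ` bmc_paths y' T = {}"
      using bmc_paths_shape by blast
  qed (simp_all add: finite_bmc_paths)
  also have "\<dots> = bmc_step (\<lambda>y. path_sum y T (\<lambda>ys. F (x # ys))) x"
    unfolding bmc_step_def path_sum_def
    by (intro sum.cong) (simp_all add: sum.reindex path_weight_Cons sum_distrib_left mult.assoc)
  finally show ?thesis .
qed

lemma path_sum_1 [simp]: "path_sum x T (\<lambda>_. 1) = 1"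
  by (induction T arbitrary: x) (simp_all add: path_sum_Suc)

definition visit_prob :: "nat \<Rightarrow> nat \<Rightarrow> nat \<Rightarrow> nat \<Rightarrow> real" where
  "visit_prob n T x j = path_sum x T (\<lambda>xs. of_bool (j \<le> count_list xs n))"

lemma visit_prob_0: "visit_prob n 0 x j = of_bool (j \<le> of_bool (x = n))"
  by (simp add: visit_prob_def)

lemma visit_prob_Suc: "visit_prob n (Suc T) x j = bmc_step (\<lambda>y. visit_prob n T y (j - of_bool (x = n))) x"
  unfolding visit_prob_def path_sum_Suc by (simp add: le_diff_conv)

lemma visit_prob_trivial [simp]: "visit_prob n T x 0 = 1"
  by (simp add: visit_prob_def)

lemma visit_prob_nonneg: "visit_prob n T x j \<ge> 0"
proof (induction T arbitrary: x j)
  case (Suc T)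
  then show ?case
    using bmc_step_mono[of "\<lambda>_. 0"] by (simp add: visit_prob_Suc)
qed (simp add: visit_prob_0)

text \<open>To be visited \<open>j \<ge> 1\<close> times, the chain must hit \<open>n\<close> and then return \<open>j - 1\<close> times.\<close>

definition visit_limit :: "nat \<Rightarrow> nat \<Rightarrow> nat \<Rightarrow> real" where
  "visit_limit n x j = (if j = 0 then 1 else hit_prob n x * (1 - escape_prob n) ^ (j - 1))"

lemma visit_limit_nonneg: "visit_limit n x j \<ge> 0"
  using escape_prob_le_1[of n] hit_prob_nonneg[of n x] by (simp add: visit_limit_def)

lemma visit_limit_le_hit_prob: "j \<ge> 1 \<Longrightarrow> visit_limit n x j \<le> hit_prob n x"
  using escape_prob_pos[of n] escape_prob_le_1[of n] hit_prob_nonneg[of n x]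
  by (simp add: visit_limit_def mult_left_le power_le_one)

lemma bmc_step_visit_limit: "bmc_step (\<lambda>y. visit_limit n y (j - of_bool (x = n))) x = visit_limit n x j"
proof -
  consider "j = 0" | "j \<ge> 1" "x \<noteq> n" | "j = 1" "x = n" | i where "j = Suc (Suc i)" "x = n"
    by (metis One_nat_def less_one not_less not_less_eq_eq not0_implies_Suc)
  then show ?thesis
  proof cases
    case 2
    then have "bmc_step (\<lambda>y. visit_limit n y j) x
        = bmc_step (\<lambda>y. hit_prob n y * (1 - escape_prob n) ^ (j - 1)) x"
      by (simp add: visit_limit_def)
    then show ?thesis
      using 2 by (simp add: bmc_step_mult_right bmc_step_hit_prob visit_limit_def)
  next
    case 4
    then have "bmc_step (\<lambda>y. visit_limit n y (j - 1)) x
        = bmc_step (\<lambda>y. hit_prob n y * (1 - escape_prob n) ^ i) x"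
      by (simp add: visit_limit_def)
    then show ?thesis
      using 4 by (simp add: bmc_step_mult_right bmc_step_hit_prob hit_prob_eq_1 visit_limit_def)
  qed (simp_all add: visit_limit_def hit_prob_eq_1)
qed

lemma visit_prob_le_limit: "visit_prob n T x j \<le> visit_limit n x j"
proof (induction T arbitrary: x j)
  case 0
  then show ?case
    using visit_limit_nonneg[of n x j] by (auto simp: visit_prob_0 visit_limit_def hit_prob_eq_1 le_Suc_eq)
next
  case (Suc T)
  have "visit_prob n (Suc T) x j \<le> bmc_step (\<lambda>y. visit_limit n y (j - of_bool (x = n))) x"
    unfolding visit_prob_Suc by (intro bmc_step_mono Suc.IH)
  then show ?case
    by (simp only: bmc_step_visit_limit)
qed

lemma visit_limit_minus_visit_prob_le:
  "visit_limit n x j - visit_prob n T x j \<le> (bmc_step ^^ T) (hit_prob n) x"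
proof (induction T arbitrary: x j)
  case 0
  then show ?case
    using visit_limit_le_hit_prob[of j n x] visit_prob_nonneg[of n 0 x j] hit_prob_nonneg[of n x]
    by (cases "j = 0") (simp_all add: visit_limit_def)
next
  case (Suc T)
  let ?j = "j - of_bool (x = n)"
  have "visit_limit n x j - visit_prob n (Suc T) x j
      = bmc_step (\<lambda>y. visit_limit n y ?j - visit_prob n T y ?j) x"
    by (simp add: bmc_step_diff bmc_step_visit_limit visit_prob_Suc)
  also have "\<dots> \<le> bmc_step ((bmc_step ^^ T) (hit_prob n)) x"
    by (intro bmc_step_mono Suc.IH)
  finally show ?case
    by simp
qed

lemma visit_prob_tendsto: "(\<lambda>T. visit_prob n T x j) \<longlonglongrightarrow> visit_limit n x j"
proof (rule tendsto_sandwich)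
  show "\<forall>\<^sub>F T in sequentially. visit_limit n x j - (bmc_step ^^ T) (hit_prob n) x \<le> visit_prob n T x j"
    using visit_limit_minus_visit_prob_le by (simp add: algebra_simps)
  show "\<forall>\<^sub>F T in sequentially. visit_prob n T x j \<le> visit_limit n x j"
    by (simp add: visit_prob_le_limit)
  show "(\<lambda>T. visit_limit n x j - (bmc_step ^^ T) (hit_prob n) x) \<longlonglongrightarrow> visit_limit n x j"
    using tendsto_diff[OF tendsto_const iter_hit_prob_tendsto_0] by simp
qed simp

definition trajectory :: "(nat \<Rightarrow> 'a \<Rightarrow> nat) \<Rightarrow> nat \<Rightarrow> 'a \<Rightarrow> nat list" where
  "trajectory X T \<omega> = map (\<lambda>t. X t \<omega>) [0..<Suc T]"

lemma length_trajectory [simp]: "length (trajectory X T \<omega>) = Suc T"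
  by (simp add: trajectory_def)

lemma nth_trajectory [simp]: "t \<le> T \<Longrightarrow> trajectory X T \<omega> ! t = X t \<omega>"
  by (simp add: trajectory_def nth_append less_Suc_eq_le del: upt_Suc)

lemma trajectory_eq_iff: "length xs = Suc T \<Longrightarrow> trajectory X T \<omega> = xs \<longleftrightarrow> (\<forall>t\<le>T. X t \<omega> = xs ! t)"
  by (auto simp: list_eq_iff_nth_eq less_Suc_eq_le)

lemma count_list_trajectory: "count_list (trajectory X T \<omega>) n = card {t. X t \<omega> = n \<and> t \<le> T}"
proof -
  have "count_list (trajectory X T \<omega>) n = card {t. t < Suc T \<and> n = trajectory X T \<omega> ! t}"
    by (simp add: count_list_eq_length_filter length_filter_conv_card)
  also have "{t. t < Suc T \<and> n = trajectory X T \<omega> ! t} = {t. X t \<omega> = n \<and> t \<le> T}"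
    by (auto simp: less_Suc_eq_le)
  finally show ?thesis .
qed

lemma boundary_chainD:
  assumes "boundary_chain \<Omega> X"
  shows "prob_space \<Omega>" and "X t \<in> measurable \<Omega> (count_space UNIV)"
    and "measure \<Omega> {\<omega> \<in> space \<Omega>. X 0 \<omega> = 0} = 1"
    and "length xs = Suc T \<Longrightarrow>
        measure \<Omega> {\<omega> \<in> space \<Omega>. (\<forall>t\<le>T. X t \<omega> = xs ! t) \<and> X (Suc T) \<omega> = y}
        = measure \<Omega> {\<omega> \<in> space \<Omega>. \<forall>t\<le>T. X t \<omega> = xs ! t} * bmc_trans (xs ! T) y"
  using assms unfolding boundary_chain_def by auto

lemma measurable_trajectory:
  assumes "boundary_chain \<Omega> X"
  shows "trajectory X T \<in> measurable \<Omega> (count_space UNIV)"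
proof -
  note [measurable] = boundary_chainD(2)[OF assms]
  have "trajectory X T -` {xs} \<inter> space \<Omega> \<in> sets \<Omega>" for xs
  proof (cases "length xs = Suc T")
    case True
    then have "trajectory X T -` {xs} \<inter> space \<Omega> = {\<omega> \<in> space \<Omega>. \<forall>t\<le>T. X t \<omega> = xs ! t}"
      by (auto simp: trajectory_eq_iff)
    also have "\<dots> \<in> sets \<Omega>"
      by measurable
    finally show ?thesis .
  next
    case False
    then have "trajectory X T -` {xs} = {}"
      by auto
    then show ?thesis
      by simp
  qed
  then show ?thesis
    by (simp add: measurable_count_space_eq2_countable)
qed

lemma measure_initial_state:
  assumes chain: "boundary_chain \<Omega> X"
  shows "measure \<Omega> {\<omega> \<in> space \<Omega>. X 0 \<omega> = y} = of_bool (y = 0)"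
proof (cases "y = 0")
  case False
  interpret prob_space \<Omega>
    using boundary_chainD(1)[OF chain] .
  note [measurable] = boundary_chainD(2)[OF chain]
  have "prob {\<omega> \<in> space \<Omega>. X 0 \<omega> = y} \<le> prob (space \<Omega> - {\<omega> \<in> space \<Omega>. X 0 \<omega> = 0})"
    using False by (intro finite_measure_mono) auto
  also have "\<dots> = 0"
    using boundary_chainD(3)[OF chain] by (simp add: prob_compl)
  finally show ?thesis
    using False by (simp add: measure_le_0_iff)
qed (simp add: boundary_chainD(3)[OF chain])

lemma measure_trajectory_eq:
  assumes chain: "boundary_chain \<Omega> X"
  shows "length xs = Suc T \<Longrightarrow>
    measure \<Omega> {\<omega> \<in> space \<Omega>. trajectory X T \<omega> = xs} = of_bool (hd xs = 0) * path_weight xs"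
proof (induction T arbitrary: xs)
  case 0
  then obtain y where xs: "xs = [y]"
    by (metis Suc_length_conv length_0_conv)
  then have "{\<omega> \<in> space \<Omega>. trajectory X 0 \<omega> = xs} = {\<omega> \<in> space \<Omega>. X 0 \<omega> = y}"
    by (simp add: trajectory_eq_iff)
  then show ?case
    by (simp add: xs measure_initial_state[OF chain])
next
  case (Suc T)
  then obtain ys y where xs: "xs = ys @ [y]" and ys: "length ys = Suc T"
    by (metis length_Suc_conv_rev)
  have "{\<omega> \<in> space \<Omega>. trajectory X (Suc T) \<omega> = xs}
      = {\<omega> \<in> space \<Omega>. (\<forall>t\<le>T. X t \<omega> = ys ! t) \<and> X (Suc T) \<omega> = y}"
    using ys by (auto simp: xs trajectory_eq_iff nth_append le_Suc_eq less_Suc_eq_le)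
  moreover have "{\<omega> \<in> space \<Omega>. \<forall>t\<le>T. X t \<omega> = ys ! t} = {\<omega> \<in> space \<Omega>. trajectory X T \<omega> = ys}"
    using ys by (simp add: trajectory_eq_iff)
  moreover have "ys \<noteq> []"
    using ys by auto
  moreover have "last ys = ys ! T"
    using ys \<open>ys \<noteq> []\<close> by (simp add: last_conv_nth)
  ultimately show ?case
    using boundary_chainD(4)[OF chain ys] Suc.IH[OF ys] by (simp add: xs path_weight_snoc)
qed

lemma measure_trajectory_in:
  assumes chain: "boundary_chain \<Omega> X"
  shows "measure \<Omega> {\<omega> \<in> space \<Omega>. trajectory X T \<omega> \<in> A} = path_sum 0 T (\<lambda>xs. of_bool (xs \<in> A))"
proof -
  define D where "D = distr \<Omega> (count_space UNIV) (trajectory X T)"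
  interpret prob_space \<Omega>
    using boundary_chainD(1)[OF chain] .
  interpret D: prob_space D
    unfolding D_def by (intro prob_space_distr measurable_trajectory chain)
  have measure_D: "measure D B = measure \<Omega> {\<omega> \<in> space \<Omega>. trajectory X T \<omega> \<in> B}" for B
    unfolding D_def using measurable_trajectory[OF chain]
    by (simp add: measure_distr vimage_def Int_def conj_commute)
  let ?P = "bmc_paths 0 T"
  have measure_D_paths: "measure D B = (\<Sum>xs\<in>B. path_weight xs)" if "B \<subseteq> ?P" for B
  proof -
    have "finite B"
      using that finite_bmc_paths finite_subset by blast
    then have "measure D B = (\<Sum>xs\<in>B. measure D {xs})"
      by (intro D.finite_measure_eq_sum_singleton) (simp_all add: D_def)
    also have "\<dots> = (\<Sum>xs\<in>B. path_weight xs)"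
      using that bmc_paths_shape by (intro sum.cong) (auto simp: measure_D measure_trajectory_eq[OF chain])
    finally show ?thesis .
  qed
  have "measure D ?P = 1"
    using path_sum_1[of 0 T] unfolding path_sum_def by (simp add: measure_D_paths)
  then have "AE xs in D. xs \<in> ?P"
    by (rule D.AE_prob_1)
  then have "measure D A = measure D (A \<inter> ?P)"
    by (intro measure_eq_AE) (auto simp: D_def)
  also have "\<dots> = (\<Sum>xs\<in>?P \<inter> A. path_weight xs)"
    by (simp add: measure_D_paths Int_commute)
  also have "\<dots> = path_sum 0 T (\<lambda>xs. of_bool (xs \<in> A))"
    by (simp add: path_sum_def sum.inter_restrict finite_bmc_paths)
  finally show ?thesis
    by (simp add: measure_D)
qed

lemma measure_visits_ge:
  assumes "boundary_chain \<Omega> X"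
  shows "measure \<Omega> {\<omega> \<in> space \<Omega>. j \<le> card {t. X t \<omega> = n \<and> t \<le> T}} = visit_prob n T 0 j"
  using measure_trajectory_in[OF assms, of T "{xs. j \<le> count_list xs n}"]
  by (simp add: visit_prob_def count_list_trajectory)

lemma sets_visits_ge:
  assumes "boundary_chain \<Omega> X"
  shows "{\<omega> \<in> space \<Omega>. j \<le> card {t. X t \<omega> = n \<and> t \<le> T}} \<in> sets \<Omega>"
proof -
  have "{\<omega> \<in> space \<Omega>. j \<le> card {t. X t \<omega> = n \<and> t \<le> T}}
      = trajectory X T -` {xs. j \<le> count_list xs n} \<inter> space \<Omega>"
    by (auto simp: count_list_trajectory)
  also have "\<dots> \<in> sets \<Omega>"
    by (rule measurable_sets[OF measurable_trajectory[OF assms]]) simp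
  finally show ?thesis .
qed

lemma sets_ever_visits_ge:
  assumes "boundary_chain \<Omega> X"
  shows "{\<omega> \<in> space \<Omega>. \<exists>T. j \<le> card {t. X t \<omega> = n \<and> t \<le> T}} \<in> sets \<Omega>"
proof -
  have "{\<omega> \<in> space \<Omega>. \<exists>T. j \<le> card {t. X t \<omega> = n \<and> t \<le> T}}
      = (\<Union>T. {\<omega> \<in> space \<Omega>. j \<le> card {t. X t \<omega> = n \<and> t \<le> T}})"
    by auto
  also have "\<dots> \<in> sets \<Omega>"
    by (intro sets.countable_UN image_subsetI sets_visits_ge[OF assms])
  finally show ?thesis .
qed

lemma measure_ever_visits_ge:
  assumes chain: "boundary_chain \<Omega> X" and "j \<ge> 1"
  shows "measure \<Omega> {\<omega> \<in> space \<Omega>. \<exists>T. j \<le> card {t. X t \<omega> = n \<and> t \<le> T}} = (1 - escape_prob n) ^ (j - 1)"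
proof -
  interpret prob_space \<Omega>
    using boundary_chainD(1)[OF chain] .
  define A where "A T = {\<omega> \<in> space \<Omega>. j \<le> card {t. X t \<omega> = n \<and> t \<le> T}}" for T
  have "range A \<subseteq> sets \<Omega>"
    unfolding A_def by (intro image_subsetI sets_visits_ge[OF chain])
  moreover have "incseq A"
  proof (rule incseq_SucI, rule subsetI)
    fix T \<omega>
    assume "\<omega> \<in> A T"
    moreover have "card {t. X t \<omega> = n \<and> t \<le> T} \<le> card {t. X t \<omega> = n \<and> t \<le> Suc T}"
      by (intro card_mono) auto
    ultimately show "\<omega> \<in> A (Suc T)"
      by (simp add: A_def)
  qed
  ultimately have "(\<lambda>T. prob (A T)) \<longlonglongrightarrow> prob (\<Union>T. A T)"
    by (rule finite_Lim_measure_incseq)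
  moreover have "(\<lambda>T. prob (A T)) \<longlonglongrightarrow> (1 - escape_prob n) ^ (j - 1)"
    using visit_prob_tendsto[of n 0 j] assms
    by (simp add: A_def measure_visits_ge visit_limit_def hit_prob_eq_1)
  ultimately have "prob (\<Union>T. A T) = (1 - escape_prob n) ^ (j - 1)"
    by (rule LIMSEQ_unique)
  moreover have "(\<Union>T. A T) = {\<omega> \<in> space \<Omega>. \<exists>T. j \<le> card {t. X t \<omega> = n \<and> t \<le> T}}"
    by (auto simp: A_def)
  ultimately show ?thesis
    by simp
qed

lemma measure_visits_eq:
  assumes chain: "boundary_chain \<Omega> X" and "k \<ge> 1"
  shows "measure \<Omega> {\<omega> \<in> space \<Omega>. finite {t. X t \<omega> = n} \<and> card {t. X t \<omega> = n} = k}
    = escape_prob n * (1 - escape_prob n) ^ (k - 1)"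
proof -
  interpret prob_space \<Omega>
    using boundary_chainD(1)[OF chain] .
  define B where "B j = {\<omega> \<in> space \<Omega>. \<exists>T. j \<le> card {t. X t \<omega> = n \<and> t \<le> T}}" for j
  have "{\<omega> \<in> space \<Omega>. finite {t. X t \<omega> = n} \<and> card {t. X t \<omega> = n} = k} = B k - B (Suc k)"
    unfolding B_def finite_card_eq_iff_prefix_card by auto
  also have "prob (B k - B (Suc k)) = prob (B k) - prob (B (Suc k))"
    unfolding B_def by (intro finite_measure_Diff sets_ever_visits_ge[OF chain]) (auto dest: Suc_leD)
  also have "\<dots> = (1 - escape_prob n) ^ (k - 1) - (1 - escape_prob n) ^ k"
    using assms by (simp add: B_def measure_ever_visits_ge)
  also have "\<dots> = escape_prob n * (1 - escape_prob n) ^ (k - 1)"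
    using \<open>k \<ge> 1\<close> by (cases k) (simp_all add: algebra_simps)
  finally show ?thesis .
qed

section \<open>Asymptotics of the mean number of visits\<close>

lemma visit_mean_eq: "visit_mean n = 3/2 * bmc_h n"
proof (induction n)
  case 0
  then show ?case
    by (simp add: visit_mean_def desc_fact_def)
next
  case (Suc n)
  define D where "D = desc_fact (real n + 3/2) (n + 1) / fact (n + 1)"
  have "desc_fact (real (Suc n) + 3/2) (Suc n + 1) = (real n + 5/2) * desc_fact (real n + 3/2) (n + 1)"
    using desc_fact_Suc[of "real n + 3/2" "n + 1"] by (simp add: algebra_simps)
  then have "visit_mean (Suc n) = (3 * n + 6) / (2 * n + 5) * ((n + 5/2) / (n + 2) * D)"
    by (simp add: visit_mean_def D_def algebra_simps)
  also have "\<dots> = 3/2 * D"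
  proof -
    have "0 < (2 * real n + 5) * (2 * real n + 4)"
      by simp
    then show ?thesis
      by (simp add: field_simps)
  qed
  also have "D = visit_mean n * (2 * n + 3) / (3 * n + 3)"
    by (simp add: visit_mean_def D_def)
  finally show ?case
    using Suc.IH by (simp add: bmc_h_Suc field_simps)
qed

lemma incseq_bmc_h_sq: "incseq (\<lambda>n. bmc_h n ^ 2 / (n + 1))"
proof (rule incseq_SucI)
  fix n
  let ?r = "(2 * real n + 3) ^ 2 / ((2 * real n + 2) * (2 * real n + 4))"
  have pos: "0 < (2 * real n + 2) * (2 * real n + 4)"
    by simp
  then have step: "bmc_h (Suc n) ^ 2 / (Suc n + 1) = bmc_h n ^ 2 / (n + 1) * ?r"
    by (simp add: bmc_h_Suc power_divide power_mult_distrib divide_simps) (simp add: algebra_simps power2_eq_square)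
  have "(2 * real n + 2) * (2 * real n + 4) \<le> (2 * real n + 3) ^ 2"
    by (simp add: power2_eq_square algebra_simps)
  with pos have "1 \<le> ?r"
    by (simp only: le_divide_eq_1_pos)
  moreover have "0 \<le> bmc_h n ^ 2 / (n + 1)"
    by simp
  ultimately show "bmc_h n ^ 2 / (n + 1) \<le> bmc_h (Suc n) ^ 2 / (Suc n + 1)"
    unfolding step by (metis mult.right_neutral mult_left_mono)
qed

lemma decseq_bmc_h_sq: "decseq (\<lambda>n. bmc_h n ^ 2 / (2 * n + 1))"
proof (rule decseq_SucI)
  fix n
  let ?r = "(2 * real n + 3) * (2 * real n + 1) / (2 * real n + 2) ^ 2"
  have step: "bmc_h (Suc n) ^ 2 / (2 * Suc n + 1) = bmc_h n ^ 2 / (2 * n + 1) * ?r"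
    by (simp add: bmc_h_Suc power_divide power_mult_distrib divide_simps) (simp add: algebra_simps power2_eq_square)
  have "(2 * real n + 3) * (2 * real n + 1) \<le> (2 * real n + 2) ^ 2"
    by (simp add: power2_eq_square algebra_simps)
  then have "?r \<le> 1"
    by (simp only: divide_le_eq_1_pos zero_less_power2)
  then show "bmc_h (Suc n) ^ 2 / (2 * Suc n + 1) \<le> bmc_h n ^ 2 / (2 * n + 1)"
    unfolding step by (intro mult_left_le) simp_all
qed

lemma bmc_h_sqrt_asymp: "\<exists>L > 0. (\<lambda>n. bmc_h n / sqrt n) \<longlonglongrightarrow> L"
proof -
  have "bmc_h n ^ 2 / (n + 1) \<le> 2" for n
  proof -
    have "bmc_h n ^ 2 / (n + 1) \<le> 2 * (bmc_h n ^ 2 / (2 * n + 1))"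
      by (simp add: divide_simps)
    also have "\<dots> \<le> 2 * (bmc_h 0 ^ 2 / (2 * 0 + 1))"
      using decseq_bmc_h_sq[unfolded decseq_def, rule_format, of 0 n] by (simp add: divide_simps)
    finally show ?thesis
      by simp
  qed
  then obtain L where L: "(\<lambda>n. bmc_h n ^ 2 / (n + 1)) \<longlonglongrightarrow> L" "\<forall>n. bmc_h n ^ 2 / (n + 1) \<le> L"
    using incseq_convergent[OF incseq_bmc_h_sq] by blast
  have "(\<lambda>n. sqrt (bmc_h n ^ 2 / (n + 1) * (Suc n / n))) \<longlonglongrightarrow> sqrt (L * 1)"
    by (intro tendsto_real_sqrt tendsto_mult L(1) LIMSEQ_Suc_n_over_n)
  moreover have "\<forall>\<^sub>F n in sequentially. sqrt (bmc_h n ^ 2 / (n + 1) * (Suc n / n)) = bmc_h n / sqrt n"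
    using eventually_gt_at_top[of 0]
    by eventually_elim (simp add: real_sqrt_divide less_imp_le[OF bmc_h_pos])
  ultimately have "(\<lambda>n. bmc_h n / sqrt n) \<longlonglongrightarrow> sqrt L"
    by (simp add: tendsto_cong)
  moreover have "L \<ge> 1"
    using L(2)[rule_format, of 0] by simp
  ultimately show ?thesis
    by (intro exI[of _ "sqrt L"]) auto
qed

lemma visit_mean_asymp: "\<exists>c > 0. visit_mean \<sim>[at_top] (\<lambda>n. c * sqrt n)"
proof -
  obtain L where "L > 0" and L: "(\<lambda>n. bmc_h n / sqrt n) \<longlonglongrightarrow> L"
    using bmc_h_sqrt_asymp by blast
  have "(\<lambda>n. visit_mean n / sqrt n) \<longlonglongrightarrow> 3/2 * L"
    using tendsto_mult_left[OF L, of "3/2"] by (simp add: visit_mean_eq)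
  then have "visit_mean \<sim>[at_top] (\<lambda>n. 3/2 * L * sqrt n)"
    using \<open>L > 0\<close> by (intro asymp_equivI'_const) auto
  then show ?thesis
    using \<open>L > 0\<close> by (intro exI[of _ "3/2 * L"]) auto
qed

theorem claim3p4:
  fixes \<Omega> :: "'a measure" and X :: "nat \<Rightarrow> 'a \<Rightarrow> nat"
  assumes "boundary_chain \<Omega> X"
  shows "(\<forall>n::nat. \<exists>p::real. 0 < p \<and> p \<le> 1 \<and> 1 / p = visit_mean n \<and>
            (\<forall>k::nat. k \<ge> 1 \<longrightarrow>
               measure \<Omega> {\<omega> \<in> space \<Omega>. finite {t. X t \<omega> = n} \<and> card {t. X t \<omega> = n} = k}
               = p * (1 - p) ^ (k - 1)))
       \<and> (\<exists>c::real. c > 0 \<and> visit_mean \<sim>[at_top] (\<lambda>n. c * sqrt (real n)))"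
proof (intro conjI allI)
  fix n
  show "\<exists>p::real. 0 < p \<and> p \<le> 1 \<and> 1 / p = visit_mean n \<and>
      (\<forall>k::nat. k \<ge> 1 \<longrightarrow>
         measure \<Omega> {\<omega> \<in> space \<Omega>. finite {t. X t \<omega> = n} \<and> card {t. X t \<omega> = n} = k}
         = p * (1 - p) ^ (k - 1))"
  proof (intro exI[of _ "escape_prob n"] conjI allI impI)
    show "1 / escape_prob n = visit_mean n"
      by (simp add: escape_prob_def visit_mean_eq)
  qed (simp_all add: escape_prob_pos escape_prob_le_1 measure_visits_eq[OF assms])
next
  show "\<exists>c::real. c > 0 \<and> visit_mean \<sim>[at_top] (\<lambda>n. c * sqrt (real n))"
    by (rule visit_mean_asymp)
qed

end
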